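(* For all integers $n\ge0$, $k\ge1$ and all $0\le\beta\le\alpha$, $$\sum_{i=1}^{k}F_{ni}(\alpha,\beta)=\int_\beta^\alpha\!\!\int_0^\beta\bar\lambda\sum_{i=1}^{k}F_{(n-1)i}(\eta,\sigma)\,d\sigma\,d\eta+4\int_\beta^\alpha\!\!\int_0^\beta\frac{\eta\sigma}{(\eta^2-\sigma^2)^2}F_{n(k-1)}(\eta,\sigma)\,d\sigma\,d\eta.$$
   Context: Let $\bar\lambda\ge0$. For integers $n,k\ge0$ and $0\le\beta<\alpha$, $F_{nk}(\alpha,\beta)=\frac{\bar\lambda^{n+1}\alpha^n\beta^n}{n!(n+1)!}(\alpha-\beta)\frac{\log^k\left(\frac{\alpha+\beta}{\alpha-\beta}\right)}{k!}$, extended continuously by $0$ on the diagonal $\alpha=\beta$; $F_{nk}\equiv0$ if $n<0$ or $k<0$. *)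

theory Defs
  imports "HOL-Analysis.Analysis"
begin

text \<open>Defined by the paper's formula for 0 <= beta < alpha, as 0 on the diagonal
  (continuous extension) and for negative indices; set to 0 elsewhere (convention,
  never used by the statement).\<close>
definition F :: "real \<Rightarrow> int \<Rightarrow> int \<Rightarrow> real \<Rightarrow> real \<Rightarrow> real" where
  "F lam n k a b =
     (if n < 0 \<or> k < 0 then 0
      else if 0 \<le> b \<and> b < a then
        lam ^ (nat n + 1) * a ^ nat n * b ^ nat n / (fact (nat n) * fact (nat n + 1))
        * (a - b) * (ln ((a + b) / (a - b))) ^ nat k / fact (nat k)
      else 0)"

end

theory Submission
  imports Defs
begin

text \<open>
  Put \<open>L = ln ((a + b) / (a - b))\<close>. The partial sum \<open>F\<^sub>N\<^sub>1 + \<dots> + F\<^sub>N\<^sub>K\<close> is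
  \<open>F_coeff lam N * Phi N K a b\<close> with \<open>Phi N K a b = a ^ N * b ^ N * (a - b) * (exp_poly (K + 1) L - 1)\<close>,
  where \<open>exp_poly m\<close> is the exponential series truncated after \<open>m\<close> terms. The integrand on the
  right-hand side is exactly \<open>F_coeff lam N\<close> times the mixed partial derivative of \<open>Phi N K\<close>:
  differentiating in \<open>b\<close> produces the factor \<open>4ab / (a\<^sup>2 - b\<^sup>2)\<^sup>2\<close> in front of the top term
  \<open>L ^ (K - 1) / (K - 1)!\<close>, and all other terms collapse to \<open>N (N + 1) * Phi (N - 1) K\<close>, which matches
  \<open>lam * F_coeff lam (N - 1) = N (N + 1) * F_coeff lam N\<close>. The double integral is then evaluated by the
  fundamental theorem of calculus twice: in \<open>\<sigma>\<close>, where the first partial derivative vanishes at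
  \<open>b = 0\<close>, and in \<open>\<eta>\<close>, where \<open>Phi\<close> vanishes on the diagonal. Continuity of \<open>Phi\<close> up to the
  diagonal, where \<open>L\<close> blows up, comes from \<open>exp_poly m x \<le> 2 ^ m * exp (x / 2)\<close>, which gives
  \<open>(a - b) * (exp_poly (K + 1) L - 1) \<le> 2 ^ (K + 1) * sqrt (a\<^sup>2 - b\<^sup>2)\<close>.
\<close>

section \<open>Integrability\<close>

lemma bounded_continuous_integrable_on_Icc:
  fixes f :: "real \<Rightarrow> real"
  assumes "continuous_on {a<..<b} f" and "\<And>x. x \<in> {a<..<b} \<Longrightarrow> \<bar>f x\<bar> \<le> C"
  shows "f integrable_on {a..b}"
proof -
  have "f \<in> borel_measurable (lebesgue_on {a<..<b})"
    by (rule continuous_imp_measurable_on_sets_lebesgue[OF assms(1)]) simp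
  moreover have "(\<lambda>_. C) integrable_on {a<..<b}"
    by (simp add: integrable_const_ivl flip: integrable_on_Icc_iff_Ioo)
  ultimately have "f integrable_on {a<..<b}"
    using assms(2) by (rule measurable_bounded_by_integrable_imp_integrable_real) simp_all
  then show ?thesis by (simp add: integrable_on_Icc_iff_Ioo)
qed

lemma integral_add_mult_eq:
  fixes f g :: "'a::euclidean_space \<Rightarrow> real"
  assumes "((\<lambda>x. f x + c * g x) has_integral I) S" and "f integrable_on S" and "c \<noteq> 0"
  shows "integral S f + c * integral S g = I"
proof -
  have "(\<lambda>x. ((f x + c * g x) - f x) / c) integrable_on S"
    using assms by (intro integrable_on_divide integrable_diff) auto
  then have "g integrable_on S" using assms(3) by simp
  then have "integral S (\<lambda>x. f x + c * g x) = integral S f + c * integral S g"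
    using assms(2) by (simp add: integral_add integrable_on_mult_right)
  with assms(1) show ?thesis by (simp add: integral_unique)
qed

section \<open>Truncated exponential series\<close>

definition exp_poly :: "nat \<Rightarrow> real \<Rightarrow> real" where
  "exp_poly m x = (\<Sum>i<m. x ^ i / fact i)"

lemma exp_poly_Suc: "exp_poly (Suc m) x = exp_poly m x + x ^ m / fact m"
  by (simp add: exp_poly_def)

lemma exp_poly_Suc_0 [simp]: "exp_poly (Suc m) 0 = 1"
  by (induction m) (simp_all add: exp_poly_Suc, simp add: exp_poly_def)

lemma sum_power_div_fact_eq_exp_poly: "(\<Sum>i=1..m. x ^ i / fact i) = exp_poly (Suc m) x - 1"
proof -
  have "{..<Suc m} = insert 0 {1..m}" by auto
  then show ?thesis by (simp add: exp_poly_def)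
qed

lemma exp_poly_ge_1: "0 \<le> x \<Longrightarrow> 1 \<le> exp_poly (Suc m) x"
  for x :: real
proof -
  assume "0 \<le> x"
  then have "0 \<le> (\<Sum>i=1..m. x ^ i / fact i)" by (intro sum_nonneg) auto
  then show ?thesis unfolding sum_power_div_fact_eq_exp_poly by simp
qed

lemma exp_poly_le_exp: "0 \<le> x \<Longrightarrow> exp_poly m x \<le> exp x"
  using sum_le_suminf[of "\<lambda>i. x ^ i /\<^sub>R fact i" "{..<m}"] exp_converges[of x]
  by (simp add: exp_poly_def sums_iff divide_inverse_commute)

lemma exp_poly_le_exp_half: "0 \<le> x \<Longrightarrow> exp_poly m x \<le> 2 ^ m * exp (x / 2)"
proof -
  assume x: "0 \<le> x"
  have "exp_poly m x = (\<Sum>i<m. 2 ^ i * ((x / 2) ^ i / fact i))"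
    unfolding exp_poly_def by (simp add: power_divide)
  also have "\<dots> \<le> (\<Sum>i<m. 2 ^ m * ((x / 2) ^ i / fact i))"
    using x by (intro sum_mono mult_right_mono power_increasing) auto
  also have "\<dots> = 2 ^ m * exp_poly m (x / 2)"
    by (simp add: exp_poly_def sum_distrib_left)
  also have "\<dots> \<le> 2 ^ m * exp (x / 2)"
    using exp_poly_le_exp[of "x / 2" m] x by simp
  finally show ?thesis .
qed

lemma has_real_derivative_exp_poly_Suc: "(exp_poly (Suc m) has_real_derivative exp_poly m x) (at x)"
proof (induction m)
  case 0
  show ?case by (simp add: exp_poly_def)
next
  case (Suc m)
  have "((\<lambda>x. x ^ Suc m / fact (Suc m)) has_real_derivative x ^ m / fact m) (at x)"
    by (rule DERIV_cong[OF DERIV_cdivide[OF DERIV_pow]]) (simp add: fact_Suc)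
  from DERIV_add[OF Suc.IH this] show ?case
    by (simp only: exp_poly_Suc[abs_def])
qed

lemma has_real_derivative_exp_poly_Suc_comp [derivative_intros]:
  "(f has_real_derivative f') (at x within S) \<Longrightarrow>
   ((\<lambda>x. exp_poly (Suc m) (f x)) has_real_derivative exp_poly m (f x) * f') (at x within S)"
  using DERIV_chain2[OF has_real_derivative_exp_poly_Suc] .

lemma continuous_on_exp_poly [continuous_intros]:
  "continuous_on S f \<Longrightarrow> continuous_on S (\<lambda>x. exp_poly m (f x))"
  unfolding exp_poly_def by (intro continuous_intros) auto

section \<open>The function Phi and its partial derivatives\<close>

lemma square_diff_square_eq: "x\<^sup>2 - y\<^sup>2 = (x + y) * (x - y)"
  for x y :: "'a::comm_ring_1"
  by (simp add: power2_eq_square algebra_simps)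

definition log_ratio :: "real \<Rightarrow> real \<Rightarrow> real" where
  "log_ratio a b = ln (a + b) - ln (a - b)"

lemma log_ratio_nonneg: "0 \<le> b \<Longrightarrow> b < a \<Longrightarrow> 0 \<le> log_ratio a b"
  by (simp add: log_ratio_def)

lemma log_ratio_0 [simp]: "0 < a \<Longrightarrow> log_ratio a 0 = 0"
  by (simp add: log_ratio_def)

lemma diff_mult_exp_half_log_ratio:
  assumes "\<bar>b\<bar> < a"
  shows "(a - b) * exp (log_ratio a b / 2) = sqrt (a\<^sup>2 - b\<^sup>2)"
proof -
  have "exp (log_ratio a b / 2) * exp (log_ratio a b / 2) = (a + b) / (a - b)"
    using assms by (simp add: log_ratio_def exp_diff flip: exp_add)
  then have "((a - b) * exp (log_ratio a b / 2))\<^sup>2 = a\<^sup>2 - b\<^sup>2"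
    using assms by (simp add: power2_eq_square square_diff_square_eq field_simps)
  then show ?thesis
    using assms by (intro real_sqrt_unique[symmetric]) auto
qed

lemma has_real_derivative_log_ratio_fst:
  assumes "\<bar>b\<bar> < a"
  shows "((\<lambda>a. log_ratio a b) has_real_derivative - 2 * b / (a\<^sup>2 - b\<^sup>2)) (at a)"
proof -
  have "0 < a + b" "0 < a - b" using assms by auto
  then show ?thesis unfolding log_ratio_def
    by (auto intro!: derivative_eq_intros simp: field_simps power2_eq_square)
qed

lemma has_real_derivative_log_ratio_snd:
  assumes "\<bar>b\<bar> < a"
  shows "((\<lambda>b. log_ratio a b) has_real_derivative 2 * a / (a\<^sup>2 - b\<^sup>2)) (at b)"
proof -
  have "0 < a + b" "0 < a - b" using assms by auto
  then show ?thesis unfolding log_ratio_def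
    by (auto intro!: derivative_eq_intros simp: field_simps power2_eq_square)
qed

definition Phi :: "nat \<Rightarrow> nat \<Rightarrow> real \<Rightarrow> real \<Rightarrow> real" where
  "Phi N K a b = a ^ N * b ^ N * (a - b) * (exp_poly (Suc K) (log_ratio a b) - 1)"

definition Phi_da :: "nat \<Rightarrow> nat \<Rightarrow> real \<Rightarrow> real \<Rightarrow> real" where
  "Phi_da N K a b =
     (real N * a ^ (N - 1) * b ^ N * (a - b) + a ^ N * b ^ N) * (exp_poly (Suc K) (log_ratio a b) - 1)
     - 2 * a ^ N * b ^ Suc N / (a + b) * exp_poly K (log_ratio a b)"

definition Phi_dab :: "nat \<Rightarrow> nat \<Rightarrow> real \<Rightarrow> real \<Rightarrow> real" where
  "Phi_dab N j a b = real N * real (Suc N) * Phi (N - 1) (Suc j) a b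
     + 4 * a * b / (a\<^sup>2 - b\<^sup>2)\<^sup>2 * (a ^ N * b ^ N * (a - b)) * log_ratio a b ^ j / fact j"

lemma has_real_derivative_Phi_fst:
  assumes "\<bar>b\<bar> < a"
  shows "((\<lambda>a. Phi N K a b) has_real_derivative Phi_da N K a b) (at a)"
proof -
  \<comment> \<open>\<open>field_simps\<close> multiplies out \<open>(a + b) * (a - b)\<close>, so its positivity is needed in that form.\<close>
  have pos: "0 < a + b" "0 < a - b" "0 < a * a - b * b"
    using assms by (auto simp: square_diff_square_factored)
  have "((\<lambda>a. a ^ N * b ^ N * (a - b)) has_real_derivative
          real N * a ^ (N - 1) * b ^ N * (a - b) + a ^ N * b ^ N) (at a)"
    by (auto intro!: derivative_eq_intros)
  from DERIV_mult[OF this DERIV_diff[OF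
         has_real_derivative_exp_poly_Suc_comp[OF has_real_derivative_log_ratio_fst[OF assms]] DERIV_const]]
  show ?thesis unfolding Phi_def
    by (rule DERIV_cong)
      (use pos in \<open>simp add: Phi_da_def square_diff_square_eq field_simps\<close>)
qed

lemma has_real_derivative_Phi_da_snd:
  assumes "\<bar>b\<bar> < a"
  shows "((\<lambda>b. Phi_da N (Suc j) a b) has_real_derivative Phi_dab N j a b) (at b)"
proof -
  have pos: "0 < a + b" "0 < a - b" "0 < a * a - b * b"
    using assms by (auto simp: square_diff_square_factored)
  define Lb where "Lb = 2 * a / (a\<^sup>2 - b\<^sup>2)"
  define A where "A = real N * a ^ (N - 1) * b ^ N * (a - b) + a ^ N * b ^ N"
  define B where "B = 2 * a ^ N * b ^ Suc N / (a + b)"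
  define A' where "A' = real N * real (Suc N) * a ^ (N - 1) * b ^ (N - 1) * (a - b)"
  define B' where "B' = 2 * a ^ N * (real (Suc N) * b ^ N / (a + b) - b ^ Suc N / (a + b)\<^sup>2)"
  have dA: "((\<lambda>b. real N * a ^ (N - 1) * b ^ N * (a - b) + a ^ N * b ^ N) has_real_derivative A') (at b)"
    unfolding A'_def by (rule DERIV_cong, (rule derivative_eq_intros refl)+) (cases N, simp_all add: algebra_simps)
  have dB: "((\<lambda>b. 2 * a ^ N * b ^ Suc N / (a + b)) has_real_derivative B') (at b)"
    unfolding B'_def
    by (rule DERIV_cong[OF DERIV_divide[OF DERIV_cmult[OF DERIV_pow] DERIV_add[OF DERIV_const DERIV_ident]]])
      (use pos in \<open>simp_all add: divide_simps power2_eq_square, simp add: algebra_simps\<close>)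
  have dQ: "((\<lambda>b. exp_poly (Suc m) (log_ratio a b)) has_real_derivative exp_poly m (log_ratio a b) * Lb) (at b)" for m
    unfolding Lb_def by (rule has_real_derivative_exp_poly_Suc_comp[OF has_real_derivative_log_ratio_snd[OF assms]])
  let ?L = "log_ratio a b"
  have deriv: "((\<lambda>b. Phi_da N (Suc j) a b) has_real_derivative
          A' * (exp_poly (Suc (Suc j)) ?L - 1) + exp_poly (Suc j) ?L * Lb * A
          - (B' * exp_poly (Suc j) ?L + exp_poly j ?L * Lb * B)) (at b)"
    unfolding Phi_da_def A_def B_def
    by (rule DERIV_diff[OF DERIV_mult[OF dA DERIV_cong[OF DERIV_diff[OF dQ DERIV_const]]] DERIV_mult[OF dB dQ]]) simp
  have cancel: "A * Lb - B' - B * Lb = 0"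
    unfolding A_def B_def Lb_def B'_def using pos
    by (cases N) (simp_all add: square_diff_square_eq divide_simps power2_eq_square, simp_all add: algebra_simps)
  have weight: "B * Lb = 4 * a * b / (a\<^sup>2 - b\<^sup>2)\<^sup>2 * (a ^ N * b ^ N * (a - b))"
    unfolding B_def Lb_def using pos
    by (simp add: square_diff_square_eq divide_simps power2_eq_square, simp add: algebra_simps)
  have lower: "A' * (exp_poly (Suc (Suc j)) ?L - 1) = real N * real (Suc N) * Phi (N - 1) (Suc j) a b"
    unfolding A'_def Phi_def by simp
  \<comment> \<open>The coefficient of \<open>exp_poly (Suc j)\<close> cancels; of \<open>exp_poly (Suc j) - exp_poly j\<close> only
    the top term \<open>L ^ j / j!\<close> survives.\<close>
  have "A' * (exp_poly (Suc (Suc j)) ?L - 1) + exp_poly (Suc j) ?L * Lb * A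
          - (B' * exp_poly (Suc j) ?L + exp_poly j ?L * Lb * B)
        = A' * (exp_poly (Suc (Suc j)) ?L - 1) + (A * Lb - B' - B * Lb) * exp_poly (Suc j) ?L
          + B * Lb * (exp_poly (Suc j) ?L - exp_poly j ?L)"
    by (simp add: algebra_simps)
  also have "\<dots> = Phi_dab N j a b"
    unfolding cancel unfolding weight lower Phi_dab_def by (simp add: exp_poly_Suc)
  finally show ?thesis using deriv by simp
qed

lemma Phi_da_0 [simp]: "0 < a \<Longrightarrow> Phi_da N K a 0 = 0"
  by (simp add: Phi_da_def)

lemma Phi_bounds:
  assumes "0 \<le> b" "b < a"
  shows "0 \<le> Phi N K a b" "Phi N K a b \<le> 2 ^ Suc K * a ^ N * b ^ N * sqrt (a\<^sup>2 - b\<^sup>2)"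
proof -
  define E where "E = exp_poly (Suc K) (log_ratio a b)"
  have L: "0 \<le> log_ratio a b" using assms by (rule log_ratio_nonneg)
  have Phi_eq: "Phi N K a b = a ^ N * b ^ N * ((a - b) * (E - 1))"
    by (simp add: Phi_def E_def)
  have "0 \<le> (a - b) * (E - 1)"
    using exp_poly_ge_1[OF L] assms by (simp add: E_def)
  then show "0 \<le> Phi N K a b" unfolding Phi_eq using assms by simp
  have "(a - b) * (E - 1) \<le> (a - b) * (2 ^ Suc K * exp (log_ratio a b / 2))"
    using exp_poly_le_exp_half[OF L, of "Suc K"] assms by (intro mult_left_mono) (auto simp: E_def)
  also have "\<dots> = 2 ^ Suc K * sqrt (a\<^sup>2 - b\<^sup>2)"
    using diff_mult_exp_half_log_ratio[of b a] assms by simp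
  finally have "a ^ N * b ^ N * ((a - b) * (E - 1)) \<le> a ^ N * b ^ N * (2 ^ Suc K * sqrt (a\<^sup>2 - b\<^sup>2))"
    using assms by (intro mult_left_mono) auto
  then show "Phi N K a b \<le> 2 ^ Suc K * a ^ N * b ^ N * sqrt (a\<^sup>2 - b\<^sup>2)"
    unfolding Phi_eq by (simp add: mult_ac)
qed

lemma Phi_le:
  assumes "0 \<le> b" "b < a" "a \<le> c"
  shows "Phi N K a b \<le> 2 ^ Suc K * c ^ N * c ^ N * c"
proof -
  have "a\<^sup>2 - b\<^sup>2 \<le> c\<^sup>2"
    using power_mono[of a c 2] zero_le_power2[of b] assms by linarith
  then have sqrt_le: "sqrt (a\<^sup>2 - b\<^sup>2) \<le> c"
    using assms by (simp add: real_le_lsqrt)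
  have powers_le: "a ^ N * b ^ N \<le> c ^ N * c ^ N"
    using assms by (intro mult_mono power_mono) auto
  have "a ^ N * b ^ N * sqrt (a\<^sup>2 - b\<^sup>2) \<le> c ^ N * c ^ N * c"
    using mult_mono[OF powers_le sqrt_le] assms by simp
  then have "2 ^ Suc K * a ^ N * b ^ N * sqrt (a\<^sup>2 - b\<^sup>2) \<le> 2 ^ Suc K * c ^ N * c ^ N * c"
    by (simp add: mult.assoc)
  with Phi_bounds(2)[OF assms(1,2)] show ?thesis by (rule order.trans)
qed

lemma tendsto_Phi_diagonal:
  assumes "0 \<le> b"
  shows "((\<lambda>a. Phi N K a b) \<longlongrightarrow> 0) (at_right b)"
proof (rule tendsto_sandwich)
  show "\<forall>\<^sub>F a in at_right b. 0 \<le> Phi N K a b"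
    "\<forall>\<^sub>F a in at_right b. Phi N K a b \<le> 2 ^ Suc K * a ^ N * b ^ N * sqrt (a\<^sup>2 - b\<^sup>2)"
    using eventually_at_right_less[of b] by (eventually_elim, use assms Phi_bounds in auto)+
  have "((\<lambda>a. 2 ^ Suc K * a ^ N * b ^ N * sqrt (a\<^sup>2 - b\<^sup>2)) \<longlongrightarrow>
          2 ^ Suc K * b ^ N * b ^ N * sqrt (b\<^sup>2 - b\<^sup>2)) (at_right b)"
    by (intro tendsto_intros)
  then show "((\<lambda>a. 2 ^ Suc K * a ^ N * b ^ N * sqrt (a\<^sup>2 - b\<^sup>2)) \<longlongrightarrow> 0) (at_right b)"
    by simp
qed simp

lemma has_integral_Phi_dab:
  assumes "0 \<le> \<beta>" "\<beta> < \<eta>"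
  shows "((\<lambda>\<sigma>. Phi_dab N j \<eta> \<sigma>) has_integral Phi_da N (Suc j) \<eta> \<beta>) {0..\<beta>}"
proof -
  have "((\<lambda>\<sigma>. Phi_dab N j \<eta> \<sigma>) has_integral Phi_da N (Suc j) \<eta> \<beta> - Phi_da N (Suc j) \<eta> 0) {0..\<beta>}"
  proof (rule fundamental_theorem_of_calculus)
    fix \<sigma> assume "\<sigma> \<in> {0..\<beta>}"
    then have "\<bar>\<sigma>\<bar> < \<eta>" using assms by auto
    from has_real_derivative_Phi_da_snd[OF this]
    show "(Phi_da N (Suc j) \<eta> has_vector_derivative Phi_dab N j \<eta> \<sigma>) (at \<sigma> within {0..\<beta>})"
      by (simp add: has_real_derivative_iff_has_vector_derivative has_vector_derivative_at_within)
  qed (use assms in simp)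
  then show ?thesis using assms by simp
qed

lemma has_integral_Phi_da:
  assumes "0 \<le> \<beta>" "\<beta> \<le> \<alpha>"
  shows "((\<lambda>\<eta>. Phi_da N K \<eta> \<beta>) has_integral Phi N K \<alpha> \<beta>) {\<beta>..\<alpha>}"
proof (cases "\<beta> = \<alpha>")
  case True
  then show ?thesis by (simp add: Phi_def has_integral_refl)
next
  case False
  have deriv: "((\<lambda>\<eta>. Phi N K \<eta> \<beta>) has_real_derivative Phi_da N K \<eta> \<beta>) (at \<eta>)" if "\<beta> < \<eta>" for \<eta>
    using has_real_derivative_Phi_fst that assms by simp
  have "continuous_on {\<beta>..\<alpha>} (\<lambda>\<eta>. Phi N K \<eta> \<beta>)"
  proof (rule continuous_on_IccI)
    show "((\<lambda>\<eta>. Phi N K \<eta> \<beta>) \<longlongrightarrow> Phi N K \<beta> \<beta>) (at_right \<beta>)"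
      using tendsto_Phi_diagonal[OF assms(1)] by (simp add: Phi_def)
    show "((\<lambda>\<eta>. Phi N K \<eta> \<beta>) \<longlongrightarrow> Phi N K \<alpha> \<beta>) (at_left \<alpha>)"
      using DERIV_isCont[OF deriv, of \<alpha>] False assms by (simp add: isCont_def filterlim_at_split)
    show "((\<lambda>\<eta>. Phi N K \<eta> \<beta>) \<longlongrightarrow> Phi N K \<eta> \<beta>) (at \<eta>)" if "\<beta> < \<eta>" for \<eta>
      using DERIV_isCont[OF deriv[OF that]] by (simp add: isCont_def)
  qed (use False assms in simp)
  then have "((\<lambda>\<eta>. Phi_da N K \<eta> \<beta>) has_integral Phi N K \<alpha> \<beta> - Phi N K \<beta> \<beta>) {\<beta>..\<alpha>}"
    using deriv assms
    by (intro fundamental_theorem_of_calculus_interior) (auto simp: has_real_derivative_iff_has_vector_derivative)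
  then show ?thesis by (simp add: Phi_def)
qed

lemma integrable_Phi_snd:
  assumes "\<beta> < \<eta>"
  shows "(\<lambda>\<sigma>. Phi N K \<eta> \<sigma>) integrable_on {0..\<beta>}"
  using assms unfolding Phi_def log_ratio_def
  by (intro integrable_continuous_interval continuous_intros) auto

lemma integrable_on_integral_Phi:
  assumes "0 \<le> \<beta>" "\<beta> \<le> \<alpha>"
  shows "(\<lambda>\<eta>. integral {0..\<beta>} (\<lambda>\<sigma>. Phi N K \<eta> \<sigma>)) integrable_on {\<beta>..\<alpha>}"
proof (rule bounded_continuous_integrable_on_Icc)
  have "continuous_on ({\<beta><..<\<alpha>} \<times> cbox 0 \<beta>) (\<lambda>p. Phi N K (fst p) (snd p))"
    unfolding Phi_def log_ratio_def using assms
    by (intro continuous_intros) (auto simp: cbox_interval)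
  then show "continuous_on {\<beta><..<\<alpha>} (\<lambda>\<eta>. integral {0..\<beta>} (\<lambda>\<sigma>. Phi N K \<eta> \<sigma>))"
    using integral_continuous_on_param[of "{\<beta><..<\<alpha>}" 0 \<beta> "Phi N K"]
    by (simp add: case_prod_beta cbox_interval)
  fix \<eta> assume \<eta>: "\<eta> \<in> {\<beta><..<\<alpha>}"
  define C where "C = 2 ^ Suc K * \<alpha> ^ N * \<alpha> ^ N * \<alpha>"
  have bounds: "0 \<le> Phi N K \<eta> \<sigma>" "Phi N K \<eta> \<sigma> \<le> C" if "\<sigma> \<in> {0..\<beta>}" for \<sigma>
    using Phi_bounds(1)[of \<sigma> \<eta>] Phi_le[of \<sigma> \<eta> \<alpha>] that \<eta> unfolding C_def by auto
  have int: "(\<lambda>\<sigma>. Phi N K \<eta> \<sigma>) integrable_on {0..\<beta>}"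
    using \<eta> by (intro integrable_Phi_snd) auto
  have "0 \<le> integral {0..\<beta>} (\<lambda>\<sigma>. Phi N K \<eta> \<sigma>)"
    using int bounds(1) by (rule integral_nonneg)
  moreover have "integral {0..\<beta>} (\<lambda>\<sigma>. Phi N K \<eta> \<sigma>) \<le> integral {0..\<beta>} (\<lambda>_. C)"
    using int integrable_const_ivl bounds(2) by (rule integral_le)
  ultimately show "\<bar>integral {0..\<beta>} (\<lambda>\<sigma>. Phi N K \<eta> \<sigma>)\<bar> \<le> \<beta> * C"
    using assms by simp
qed

section \<open>Partial sums of F\<close>

definition F_coeff :: "real \<Rightarrow> nat \<Rightarrow> real" where
  "F_coeff lam N = lam ^ Suc N / (fact N * fact (Suc N))"

lemma F_coeff_Suc: "lam * F_coeff lam N = real (Suc N) * real (Suc (Suc N)) * F_coeff lam (Suc N)"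
  unfolding F_coeff_def fact_Suc of_nat_Suc by (simp add: divide_simps)

lemma F_eq_F_coeff:
  assumes "0 \<le> b" "b \<le> a"
  shows "F lam (int N) (int i) a b = F_coeff lam N * (a ^ N * b ^ N * (a - b)) * log_ratio a b ^ i / fact i"
  using assms by (auto simp: F_def F_coeff_def log_ratio_def ln_div)

lemma sum_F_eq_Phi:
  assumes "0 \<le> b" "b \<le> a"
  shows "(\<Sum>i=1..int K. F lam (int N) i a b) = F_coeff lam N * Phi N K a b"
proof -
  have "{1..int K} = int ` {1..K}"
    by (simp add: image_int_atLeastAtMost)
  then have "(\<Sum>i=1..int K. F lam (int N) i a b) = (\<Sum>i=1..K. F lam (int N) (int i) a b)"
    by (simp add: sum.reindex)
  also have "\<dots> = F_coeff lam N * (a ^ N * b ^ N * (a - b)) * (\<Sum>i=1..K. log_ratio a b ^ i / fact i)"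
    using assms by (simp add: F_eq_F_coeff sum_distrib_left)
  finally show ?thesis
    unfolding sum_power_div_fact_eq_exp_poly Phi_def by simp
qed

lemma sum_F_pred_eq_Phi:
  assumes "0 \<le> b" "b \<le> a"
  shows "lam * (\<Sum>i=1..int K. F lam (int N - 1) i a b) = real N * real (Suc N) * F_coeff lam N * Phi (N - 1) K a b"
proof (cases N)
  case 0
  then show ?thesis by (simp add: F_def)
next
  case (Suc M)
  then show ?thesis
    using sum_F_eq_Phi[OF assms, where K = K and lam = lam and N = M] by (simp add: F_coeff_Suc)
qed

lemma integrand_eq_Phi_dab:
  assumes "0 \<le> \<sigma>" "\<sigma> < \<eta>"
  shows "lam * (\<Sum>i=1..int (Suc j). F lam (int N - 1) i \<eta> \<sigma>)
           + 4 * (\<eta> * \<sigma> / (\<eta>\<^sup>2 - \<sigma>\<^sup>2)\<^sup>2 * F lam (int N) (int j) \<eta> \<sigma>)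
         = F_coeff lam N * Phi_dab N j \<eta> \<sigma>"
proof -
  have "\<eta>\<^sup>2 - \<sigma>\<^sup>2 \<noteq> 0"
    using assms by (simp add: square_diff_square_eq)
  moreover note sum_F_pred_eq_Phi[where K = "Suc j" and N = N and lam = lam, OF assms(1) less_imp_le[OF assms(2)]]
  ultimately show ?thesis
    using assms by (simp add: F_eq_F_coeff Phi_dab_def field_simps)
qed

lemma inner_integrals_eq_Phi_da:
  assumes "0 \<le> \<beta>" "\<beta> < \<eta>"
  shows "integral {0..\<beta>} (\<lambda>\<sigma>. lam * (\<Sum>i=1..int (Suc j). F lam (int N - 1) i \<eta> \<sigma>))
         + 4 * integral {0..\<beta>} (\<lambda>\<sigma>. \<eta> * \<sigma> / (\<eta>\<^sup>2 - \<sigma>\<^sup>2)\<^sup>2 * F lam (int N) (int j) \<eta> \<sigma>)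
       = F_coeff lam N * Phi_da N (Suc j) \<eta> \<beta>"
proof -
  define gA where "gA \<sigma> = lam * (\<Sum>i=1..int (Suc j). F lam (int N - 1) i \<eta> \<sigma>)" for \<sigma>
  define gB where "gB \<sigma> = \<eta> * \<sigma> / (\<eta>\<^sup>2 - \<sigma>\<^sup>2)\<^sup>2 * F lam (int N) (int j) \<eta> \<sigma>" for \<sigma>
  have "F_coeff lam N * Phi_dab N j \<eta> \<sigma> = gA \<sigma> + 4 * gB \<sigma>" if "\<sigma> \<in> {0..\<beta>}" for \<sigma>
    unfolding gA_def gB_def using that assms by (intro integrand_eq_Phi_dab[symmetric]) auto
  then have total: "((\<lambda>\<sigma>. gA \<sigma> + 4 * gB \<sigma>) has_integral F_coeff lam N * Phi_da N (Suc j) \<eta> \<beta>) {0..\<beta>}"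
    using has_integral_mult_right[OF has_integral_Phi_dab[OF assms]] by (rule has_integral_eq)
  have "real N * real (Suc N) * F_coeff lam N * Phi (N - 1) (Suc j) \<eta> \<sigma> = gA \<sigma>" if "\<sigma> \<in> {0..\<beta>}" for \<sigma>
    unfolding gA_def using that assms by (intro sum_F_pred_eq_Phi[symmetric]) auto
  with integrable_on_mult_right[OF integrable_Phi_snd[OF assms(2)]]
  have intA: "gA integrable_on {0..\<beta>}" by (rule integrable_eq)
  have "integral {0..\<beta>} gA + 4 * integral {0..\<beta>} gB = F_coeff lam N * Phi_da N (Suc j) \<eta> \<beta>"
    using total intA by (rule integral_add_mult_eq) simp
  then show ?thesis
    by (simp only: gA_def[abs_def] gB_def[abs_def])
qed

lemma integrable_integral_sum_F_pred:
  assumes "0 \<le> \<beta>" "\<beta> \<le> \<alpha>"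
  shows "(\<lambda>\<eta>. integral {0..\<beta>} (\<lambda>\<sigma>. lam * (\<Sum>i=1..int K. F lam (int N - 1) i \<eta> \<sigma>))) integrable_on {\<beta>..\<alpha>}"
proof -
  define c where "c = real N * real (Suc N) * F_coeff lam N"
  have "(\<lambda>\<eta>. c * integral {0..\<beta>} (\<lambda>\<sigma>. Phi (N - 1) K \<eta> \<sigma>)) integrable_on {\<beta>..\<alpha>}"
    using integrable_on_integral_Phi[OF assms] by (rule integrable_on_mult_right)
  then show ?thesis
  proof (rule integrable_eq)
    fix \<eta> assume "\<eta> \<in> {\<beta>..\<alpha>}"
    then have "integral {0..\<beta>} (\<lambda>\<sigma>. c * Phi (N - 1) K \<eta> \<sigma>)
             = integral {0..\<beta>} (\<lambda>\<sigma>. lam * (\<Sum>i=1..int K. F lam (int N - 1) i \<eta> \<sigma>))"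
      unfolding c_def by (intro integral_cong sum_F_pred_eq_Phi[symmetric]) auto
    then show "c * integral {0..\<beta>} (\<lambda>\<sigma>. Phi (N - 1) K \<eta> \<sigma>)
             = integral {0..\<beta>} (\<lambda>\<sigma>. lam * (\<Sum>i=1..int K. F lam (int N - 1) i \<eta> \<sigma>))"
      by simp
  qed
qed

theorem lemma2:
  fixes lam \<alpha> \<beta> :: real and n k :: int
  assumes "lam \<ge> 0" and "n \<ge> 0" and "k \<ge> 1" and "0 \<le> \<beta>" and "\<beta> \<le> \<alpha>"
  shows "(\<Sum>i=1..k. F lam n i \<alpha> \<beta>) =
     integral {\<beta>..\<alpha>} (\<lambda>\<eta>. integral {0..\<beta>} (\<lambda>\<sigma>. lam * (\<Sum>i=1..k. F lam (n - 1) i \<eta> \<sigma>)))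
   + 4 * integral {\<beta>..\<alpha>} (\<lambda>\<eta>. integral {0..\<beta>}
        (\<lambda>\<sigma>. \<eta> * \<sigma> / (\<eta>\<^sup>2 - \<sigma>\<^sup>2)\<^sup>2 * F lam n (k - 1) \<eta> \<sigma>))"
proof -
  obtain N where n: "n = int N"
    using assms(2) nonneg_int_cases by blast
  have "k = int (Suc (nat (k - 1)))"
    using assms(3) by simp
  then obtain j where k: "k = int (Suc j)" by blast
  define IA where "IA \<eta> = integral {0..\<beta>} (\<lambda>\<sigma>. lam * (\<Sum>i=1..k. F lam (n - 1) i \<eta> \<sigma>))" for \<eta>
  define IB where "IB \<eta> = integral {0..\<beta>} (\<lambda>\<sigma>. \<eta> * \<sigma> / (\<eta>\<^sup>2 - \<sigma>\<^sup>2)\<^sup>2 * F lam n (k - 1) \<eta> \<sigma>)" for \<eta>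
  have inner: "IA \<eta> + 4 * IB \<eta> = F_coeff lam N * Phi_da N (Suc j) \<eta> \<beta>" if "\<eta> \<in> {\<beta>..\<alpha>} - {\<beta>}" for \<eta>
    using inner_integrals_eq_Phi_da[of \<beta> \<eta>, where lam = lam and j = j and N = N] that assms
    unfolding IA_def IB_def n k by simp
  have "((\<lambda>\<eta>. F_coeff lam N * Phi_da N (Suc j) \<eta> \<beta>) has_integral F_coeff lam N * Phi N (Suc j) \<alpha> \<beta>) {\<beta>..\<alpha>}"
    using has_integral_Phi_da[OF assms(4,5)] by (rule has_integral_mult_right)
  then have "((\<lambda>\<eta>. IA \<eta> + 4 * IB \<eta>) has_integral F_coeff lam N * Phi N (Suc j) \<alpha> \<beta>) {\<beta>..\<alpha>}"
    by (rule has_integral_spike_finite[where S = "{\<beta>}", rotated 2]) (simp_all add: inner)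
  moreover have "IA integrable_on {\<beta>..\<alpha>}"
    unfolding IA_def n k by (rule integrable_integral_sum_F_pred[OF assms(4,5)])
  ultimately have "integral {\<beta>..\<alpha>} IA + 4 * integral {\<beta>..\<alpha>} IB = F_coeff lam N * Phi N (Suc j) \<alpha> \<beta>"
    by (rule integral_add_mult_eq) simp
  moreover have "(\<Sum>i=1..k. F lam n i \<alpha> \<beta>) = F_coeff lam N * Phi N (Suc j) \<alpha> \<beta>"
    unfolding n k using assms(4,5) by (rule sum_F_eq_Phi)
  ultimately show ?thesis
    by (simp only: IA_def[abs_def] IB_def[abs_def])
qed

end
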